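(* The abelianization of an SB-generated group is finitely generated.
   Context: A subset of a group $G$ is strongly bounded if it has finite diameter in every left-invariant metric on $G$; a group is SB-generated if it is generated by a strongly bounded subset. *)

theory Defs
  imports "HOL-Algebra.Algebra"
begin

definition left_invariant_metric :: "('a, 'b) monoid_scheme \<Rightarrow> ('a \<Rightarrow> 'a \<Rightarrow> real) \<Rightarrow> bool" where
  "left_invariant_metric G d \<longleftrightarrow>
     (\<forall>x\<in>carrier G. \<forall>y\<in>carrier G. 0 \<le> d x y) \<and>
     (\<forall>x\<in>carrier G. \<forall>y\<in>carrier G. d x y = 0 \<longleftrightarrow> x = y) \<and>
     (\<forall>x\<in>carrier G. \<forall>y\<in>carrier G. d x y = d y x) \<and>
     (\<forall>x\<in>carrier G. \<forall>y\<in>carrier G. \<forall>z\<in>carrier G. d x z \<le> d x y + d y z) \<and>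
     (\<forall>g\<in>carrier G. \<forall>x\<in>carrier G. \<forall>y\<in>carrier G. d (g \<otimes>\<^bsub>G\<^esub> x) (g \<otimes>\<^bsub>G\<^esub> y) = d x y)"

definition strongly_bounded :: "('a, 'b) monoid_scheme \<Rightarrow> 'a set \<Rightarrow> bool" where
  "strongly_bounded G A \<longleftrightarrow> A \<subseteq> carrier G \<and>
     (\<forall>d. left_invariant_metric G d \<longrightarrow> (\<exists>C. \<forall>x\<in>A. \<forall>y\<in>A. d x y \<le> C))"

definition SB_generated :: "('a, 'b) monoid_scheme \<Rightarrow> bool" where
  "SB_generated G \<longleftrightarrow> (\<exists>A. strongly_bounded G A \<and> generate G A = carrier G)"

definition finitely_generated_group :: "('a, 'b) monoid_scheme \<Rightarrow> bool" where
  "finitely_generated_group G \<longleftrightarrow>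
     (\<exists>S. finite S \<and> S \<subseteq> carrier G \<and> generate G S = carrier G)"

definition abelianization :: "('a, 'b) monoid_scheme \<Rightarrow> 'a set monoid" where
  "abelianization G = G Mod (derived G (carrier G))"

end

theory Submission
  imports Defs "HOL-Library.Countable_Set"
begin

(* Let W_0 \<subseteq> W_1 \<subseteq> ... be subgroups exhausting G. Then d(x, y) = 1 + min {n. x^-1 y \<in> W_n}
   (for x \<noteq> y) is a left-invariant metric, so a strongly bounded generating set lies in some W_n,
   which is then all of G. Hence no quotient of an SB-generated group is the union of a countable
   chain of proper subgroups.

   Conversely, let A be an abelian group that is not finitely generated. Choose b_0, b_1, ... with
   b_n outside <b_0, ..., b_(n-1)>, and by Zorn a maximal N such that b_n stays outside
   L_n = <N, b_0, ..., b_(n-1)> for all n. Maximality puts a nontrivial power of every x \<notin> N into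
   some L_n \<setminus> N. Hence every element has a positive power in the union of the L_n, every
   element of prime order modulo N lies in it, and A/N is countable. No <N, F> with F finite is A:
   otherwise some L_n would have finite index, while the b_m with m \<ge> n lie in distinct cosets
   of L_n. Enumerating A/N gives a chain as above; apply this to A = G/[G,G]. *)

lemma (in group) generate_subgroup_eq: "subgroup H G \<Longrightarrow> generate G H = H"
  using generate_subgroup_incl[of H H] generate.incl[of _ H G] by blast

lemma (in group) generate_generate_Un:
  assumes "A \<subseteq> carrier G" "B \<subseteq> carrier G"
  shows "generate G (generate G A \<union> B) = generate G (A \<union> B)"
proof
  have "generate G A \<subseteq> generate G (A \<union> B)" "B \<subseteq> generate G (A \<union> B)"
    by (auto intro: mono_generate[THEN subsetD] generate.incl)
  then show "generate G (generate G A \<union> B) \<subseteq> generate G (A \<union> B)"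
    using assms by (intro generate_subgroup_incl generate_is_subgroup) auto
  show "generate G (A \<union> B) \<subseteq> generate G (generate G A \<union> B)"
    by (intro mono_generate) (auto intro: generate.incl)
qed

lemma (in group) in_generate_finite_subset:
  assumes "x \<in> generate G Y"
  shows "\<exists>Z. finite Z \<and> Z \<subseteq> Y \<and> x \<in> generate G Z"
  using assms
proof (induction rule: generate.induct)
  case one
  then show ?case by (auto intro: generate.one)
next
  case (incl h)
  then show ?case by (intro exI[of _ "{h}"]) (auto intro: generate.incl)
next
  case (inv h)
  then show ?case by (intro exI[of _ "{h}"]) (auto intro: generate.inv)
next
  case (eng h1 h2)
  then obtain Z1 Z2 where "finite Z1" "Z1 \<subseteq> Y" "h1 \<in> generate G Z1"
    and "finite Z2" "Z2 \<subseteq> Y" "h2 \<in> generate G Z2" by blast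
  then show ?case
    by (intro exI[of _ "Z1 \<union> Z2"])
      (auto intro: generate.eng mono_generate[of Z1 "Z1 \<union> Z2", THEN subsetD]
        mono_generate[of Z2 "Z1 \<union> Z2", THEN subsetD])
qed

lemma (in group_hom) subgroup_vimage:
  assumes "subgroup K H" shows "subgroup (h -` K \<inter> carrier G) G"
proof (rule G.subgroupI)
  show "h -` K \<inter> carrier G \<noteq> {}"
    using subgroup.one_closed[OF assms] G.one_closed hom_one by blast
qed (use assms in \<open>auto simp: subgroup.m_closed subgroup.m_inv_closed\<close>)

definition exhausting_subgroup_chain :: "('a, 'b) monoid_scheme \<Rightarrow> (nat \<Rightarrow> 'a set) \<Rightarrow> bool" where
  "exhausting_subgroup_chain G W \<longleftrightarrow> (\<forall>n. subgroup (W n) G) \<and> mono W \<and> (\<Union>n. W n) = carrier G"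

lemma (in group_hom) exhausting_subgroup_chain_vimage:
  assumes "exhausting_subgroup_chain H W"
  shows "exhausting_subgroup_chain G (\<lambda>n. h -` W n \<inter> carrier G)"
proof -
  have W: "mono W" "\<And>n. subgroup (W n) H" "(\<Union>n. W n) = carrier H"
    using assms by (auto simp: exhausting_subgroup_chain_def)
  have "mono (\<lambda>n. h -` W n \<inter> carrier G)"
    using W(1) unfolding mono_def by blast
  moreover have "(\<Union>n. h -` W n \<inter> carrier G) = carrier G"
  proof (intro equalityI subsetI)
    fix x assume "x \<in> carrier G"
    then have "h x \<in> (\<Union>n. W n)" using W(3) by simp
    then show "x \<in> (\<Union>n. h -` W n \<inter> carrier G)" using \<open>x \<in> carrier G\<close> by blast
  qed blast
  ultimately show ?thesis
    unfolding exhausting_subgroup_chain_def using subgroup_vimage[OF W(2)] by blast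
qed

lemma (in group) left_invariant_metric_of_length:
  assumes "\<And>x. x \<in> carrier G \<Longrightarrow> len x = 0 \<longleftrightarrow> x = \<one>"
    and "\<And>x. x \<in> carrier G \<Longrightarrow> 0 \<le> len x"
    and "\<And>x. x \<in> carrier G \<Longrightarrow> len (inv x) = len x"
    and "\<And>x y. x \<in> carrier G \<Longrightarrow> y \<in> carrier G \<Longrightarrow> len (x \<otimes> y) \<le> len x + len y"
  shows "left_invariant_metric G (\<lambda>x y. len (inv x \<otimes> y))"
  unfolding left_invariant_metric_def
proof (intro conjI ballI)
  fix x y z assume x: "x \<in> carrier G" and y: "y \<in> carrier G" and z: "z \<in> carrier G"
  show "0 \<le> len (inv x \<otimes> y)" using assms(2) x y by simp
  show "len (inv x \<otimes> y) = 0 \<longleftrightarrow> x = y"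
    using assms(1) x y by (metis inv_closed inv_inv inv_equality l_inv m_closed)
  show "len (inv x \<otimes> y) = len (inv y \<otimes> x)"
    using assms(3)[of "inv x \<otimes> y"] x y by (simp add: inv_mult_group)
  have "inv x \<otimes> z = (inv x \<otimes> y) \<otimes> (inv y \<otimes> z)"
    using x y z by (simp add: m_assoc) (simp add: m_assoc[symmetric])
  then show "len (inv x \<otimes> z) \<le> len (inv x \<otimes> y) + len (inv y \<otimes> z)"
    using assms(4) x y z by simp
  show "len (inv (z \<otimes> x) \<otimes> (z \<otimes> y)) = len (inv x \<otimes> y)"
    using x y z by (simp add: inv_mult_group m_assoc[symmetric]) (simp add: m_assoc)
qed

definition chain_level :: "(nat \<Rightarrow> 'a set) \<Rightarrow> 'a \<Rightarrow> nat" where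
  "chain_level W x = (LEAST n. x \<in> W n)"

lemma chain_level_le: "x \<in> W n \<Longrightarrow> chain_level W x \<le> n"
  unfolding chain_level_def by (rule Least_le)

lemma in_exhausting_chain_if_level_le:
  assumes "exhausting_subgroup_chain G W" "x \<in> carrier G" "chain_level W x \<le> n"
  shows "x \<in> W n"
proof -
  have "x \<in> (\<Union>n. W n)" using assms(1,2) by (simp add: exhausting_subgroup_chain_def)
  then obtain m where "x \<in> W m" by blast
  then have "x \<in> W (chain_level W x)" unfolding chain_level_def by (rule LeastI)
  moreover have "W (chain_level W x) \<subseteq> W n"
    using assms(1,3) unfolding exhausting_subgroup_chain_def by (simp add: monoD)
  ultimately show ?thesis by blast
qed

lemma (in group) left_invariant_metric_of_exhausting_chain:
  assumes W: "exhausting_subgroup_chain G W"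
  shows "left_invariant_metric G
    (\<lambda>x y. if inv x \<otimes> y = \<one> then 0 else real (chain_level W (inv x \<otimes> y)) + 1)"
proof (rule left_invariant_metric_of_length[where len = "\<lambda>z. if z = \<one> then 0 else real (chain_level W z) + 1"])
  have sub: "subgroup (W n) G" for n using W by (simp add: exhausting_subgroup_chain_def)
  note in_W = in_exhausting_chain_if_level_le[OF W]
  fix x y assume x: "x \<in> carrier G" and y: "y \<in> carrier G"
  have "inv x \<in> W (chain_level W x)"
    using subgroup.m_inv_closed[OF sub in_W[OF x order_refl]] .
  moreover have "inv (inv x) \<in> W (chain_level W (inv x))"
    using subgroup.m_inv_closed[OF sub in_W[OF inv_closed[OF x] order_refl]] .
  ultimately have "chain_level W (inv x) = chain_level W x"
    using x by (auto intro: antisym chain_level_le)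
  then show "(if inv x = \<one> then 0 else real (chain_level W (inv x)) + 1)
    = (if x = \<one> then 0 else real (chain_level W x) + 1)" using x by auto
  have "x \<otimes> y \<in> W (max (chain_level W x) (chain_level W y))"
    using subgroup.m_closed[OF sub in_W[OF x] in_W[OF y]] by simp
  then have "chain_level W (x \<otimes> y) \<le> max (chain_level W x) (chain_level W y)"
    by (rule chain_level_le)
  then show "(if x \<otimes> y = \<one> then 0 else real (chain_level W (x \<otimes> y)) + 1)
    \<le> (if x = \<one> then 0 else real (chain_level W x) + 1) + (if y = \<one> then 0 else real (chain_level W y) + 1)"
    using x y by auto
qed auto

lemma (in group) strongly_bounded_in_exhausting_chain:
  assumes W: "exhausting_subgroup_chain G W" and A: "strongly_bounded G A"
  shows "\<exists>n. A \<subseteq> W n"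
proof (cases "A = {}")
  case False
  then obtain a0 where a0: "a0 \<in> A" by blast
  have A_carrier: "A \<subseteq> carrier G" using A by (simp add: strongly_bounded_def)
  obtain C where C: "\<And>x y. x \<in> A \<Longrightarrow> y \<in> A \<Longrightarrow>
      (if inv x \<otimes> y = \<one> then 0 else real (chain_level W (inv x \<otimes> y)) + 1) \<le> C"
    using A left_invariant_metric_of_exhausting_chain[OF W] unfolding strongly_bounded_def by blast
  define n where "n = max (chain_level W a0) (nat \<lceil>C\<rceil>)"
  have "a \<in> W n" if a: "a \<in> A" for a
  proof -
    have "subgroup (W 0) G" using W by (simp add: exhausting_subgroup_chain_def)
    then have "chain_level W \<one> \<le> 0" by (intro chain_level_le subgroup.one_closed)
    then have "chain_level W \<one> = 0" by simp
    then have "chain_level W (inv a0 \<otimes> a) \<le> n"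
      using C[OF a0 a] unfolding n_def by (cases "inv a0 \<otimes> a = \<one>") (simp_all, linarith)
    moreover have "inv a0 \<otimes> a \<in> carrier G" "a0 \<in> carrier G" "chain_level W a0 \<le> n"
      using a0 a A_carrier unfolding n_def by auto
    ultimately have "a0 \<otimes> (inv a0 \<otimes> a) \<in> W n"
      using W in_exhausting_chain_if_level_le[OF W] unfolding exhausting_subgroup_chain_def
      by (blast intro: subgroup.m_closed)
    then show ?thesis using a0 a A_carrier by (simp add: m_assoc[symmetric] subsetD)
  qed
  then show ?thesis by blast
qed simp

lemma (in group) SB_generated_exhausting_chain_stabilizes:
  assumes "SB_generated G" "exhausting_subgroup_chain G W"
  shows "\<exists>n. W n = carrier G"
proof -
  obtain A where A: "strongly_bounded G A" "generate G A = carrier G"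
    using assms(1) unfolding SB_generated_def by blast
  then obtain n where "A \<subseteq> W n" using strongly_bounded_in_exhausting_chain assms(2) by blast
  moreover have sub: "subgroup (W n) G" using assms(2) by (simp add: exhausting_subgroup_chain_def)
  ultimately have "carrier G \<subseteq> W n" using A(2) generate_subgroup_incl by blast
  then show ?thesis using subgroup.subset[OF sub] by blast
qed

lemma (in group) proper_exhausting_chain_if_countable_index:
  assumes N: "subgroup N G" and countable: "countable (rcosets N)"
    and proper: "\<And>F. finite F \<Longrightarrow> F \<subseteq> carrier G \<Longrightarrow> generate G (N \<union> F) \<noteq> carrier G"
  shows "\<exists>W. exhausting_subgroup_chain G W \<and> (\<forall>n. W n \<noteq> carrier G)"
proof -
  have "rcosets N \<noteq> {}" using rcosetsI[OF subgroup.subset[OF N] one_closed] by blast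
  then have range: "range (from_nat_into (rcosets N)) = rcosets N"
    using countable by (rule range_from_nat_into)
  define rep where "rep n = (SOME x. x \<in> carrier G \<and> from_nat_into (rcosets N) n = N #> x)" for n
  have rep: "rep n \<in> carrier G \<and> from_nat_into (rcosets N) n = N #> rep n" for n
  proof -
    have "from_nat_into (rcosets N) n \<in> rcosets N" using range by blast
    then show ?thesis unfolding rep_def RCOSETS_def by (rule someI_ex[OF UN_E]) auto
  qed
  define W where "W n = generate G (N \<union> rep ` {..n})" for n
  have "subgroup (W n) G" for n
    unfolding W_def using subgroup.subset[OF N] rep by (intro generate_is_subgroup) auto
  moreover have "mono W"
    unfolding W_def by (intro monoI mono_generate) auto
  moreover have "(\<Union>n. W n) = carrier G"
  proof (intro equalityI subsetI)
    fix x assume x: "x \<in> carrier G"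
    then have "N #> x \<in> range (from_nat_into (rcosets N))"
      using range subgroup.subset[OF N] by (simp add: rcosetsI)
    then obtain n where "N #> x = N #> rep n" using rep by auto
    then have "x \<in> N #> rep n" using rcos_self[OF x N] by simp
    then obtain h where "h \<in> N" "x = h \<otimes> rep n" unfolding r_coset_def by blast
    moreover have "h \<in> W n" "rep n \<in> W n"
      using \<open>h \<in> N\<close> unfolding W_def by (auto intro: generate.incl)
    ultimately show "x \<in> (\<Union>n. W n)" unfolding W_def by (blast intro: generate.eng)
  next
    fix x assume "x \<in> (\<Union>n. W n)"
    then obtain n where "x \<in> W n" by blast
    then show "x \<in> carrier G"
      using subgroup.subset[OF \<open>subgroup (W n) G\<close>] by blast
  qed
  moreover have "W n \<noteq> carrier G" for n
    unfolding W_def using rep by (intro proper) auto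
  ultimately show ?thesis unfolding exhausting_subgroup_chain_def by blast
qed

lemma (in comm_group) generate_insert:
  assumes "x \<in> carrier G" "S \<subseteq> carrier G"
  shows "generate G (insert x S) = (\<lambda>(k, s). x [^] (k::int) \<otimes> s) ` (UNIV \<times> generate G S)"
proof
  show "generate G (insert x S) \<subseteq> (\<lambda>(k, s). x [^] (k::int) \<otimes> s) ` (UNIV \<times> generate G S)"
  proof
    fix y assume "y \<in> generate G (insert x S)"
    then show "y \<in> (\<lambda>(k, s). x [^] (k::int) \<otimes> s) ` (UNIV \<times> generate G S)"
    proof (induction rule: generate.induct)
      case one
      then show ?case
        using assms by (intro image_eqI[of _ _ "(0, \<one>)"]) (auto intro: generate.one)
    next
      case (incl h)
      then have "h \<in> carrier G" using assms by auto
      with incl show ?case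
        using assms by (auto intro: image_eqI[of _ _ "(1, \<one>)"] image_eqI[of _ _ "(0, h)"]
            generate.one generate.incl)
    next
      case (inv h)
      then have "h \<in> carrier G" using assms by auto
      with inv show ?case
        using assms by (auto simp: int_pow_neg intro: image_eqI[of _ _ "(-1, \<one>)"]
            image_eqI[of _ _ "(0, inv h)"] generate.one generate.inv)
    next
      case (eng h1 h2)
      then obtain i j s t where st: "s \<in> generate G S" "t \<in> generate G S"
        "h1 = x [^] (i::int) \<otimes> s" "h2 = x [^] (j::int) \<otimes> t" by auto
      moreover have "s \<in> carrier G" "t \<in> carrier G"
        using st generate_incl[OF assms(2)] by auto
      ultimately have "h1 \<otimes> h2 = x [^] (i + j) \<otimes> (s \<otimes> t)"
        using assms(1) by (simp add: int_pow_mult m_ac)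
      then show ?case using st by (auto intro: image_eqI[of _ _ "(i + j, s \<otimes> t)"] generate.eng)
    qed
  qed
  show "(\<lambda>(k, s). x [^] (k::int) \<otimes> s) ` (UNIV \<times> generate G S) \<subseteq> generate G (insert x S)"
  proof clarify
    fix k :: int and s assume "s \<in> generate G S"
    then have "s \<in> generate G (insert x S)" by (rule mono_generate[THEN subsetD, rotated]) auto
    moreover have "x [^] k \<in> generate G (insert x S)"
      using assms by (intro subgroup_int_pow_closed generate_is_subgroup) (auto intro: generate.incl)
    ultimately show "x [^] k \<otimes> s \<in> generate G (insert x S)" by (rule generate.eng[rotated])
  qed
qed

lemma (in comm_group) countable_generate_finite:
  assumes "finite F" "F \<subseteq> carrier G" shows "countable (generate G F)"
  using assms
proof (induction F rule: finite_induct)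
  case empty
  then show ?case by (simp add: generate_empty)
next
  case (insert x F)
  then show ?case by (simp add: generate_insert)
qed

lemma (in comm_group) countable_pow_preimage:
  assumes "countable Y" and "countable {x \<in> carrier G. x [^] m = \<one>}"
  shows "countable {x \<in> carrier G. x [^] (m::nat) \<in> Y}"
proof -
  define root where "root y = (SOME r. r \<in> carrier G \<and> r [^] m = y)" for y
  let ?T = "{t \<in> carrier G. t [^] m = \<one>}"
  have "{x \<in> carrier G. x [^] m \<in> Y} \<subseteq> (\<lambda>(t, y). t \<otimes> root y) ` (?T \<times> Y)"
  proof clarify
    fix x assume x: "x \<in> carrier G" "x [^] m \<in> Y"
    define y where "y = x [^] m"
    have r: "root y \<in> carrier G" "root y [^] m = y"
      unfolding root_def using someI[of "\<lambda>r. r \<in> carrier G \<and> r [^] m = y" x] x y_def by auto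
    have "(x \<otimes> inv root y) [^] m = x [^] m \<otimes> inv (root y [^] m)"
      using x r by (simp add: nat_pow_distrib nat_pow_inv)
    then have "x \<otimes> inv root y \<in> ?T" using x r by (simp add: y_def)
    moreover have "x = (x \<otimes> inv root y) \<otimes> root y" using x r by (simp add: m_assoc)
    moreover have "y \<in> Y" using x y_def by simp
    ultimately show "x \<in> (\<lambda>(t, y). t \<otimes> root y) ` (?T \<times> Y)"
      by (intro image_eqI[of _ _ "(x \<otimes> inv root y, y)"]) auto
  qed
  moreover have "countable ((\<lambda>(t, y). t \<otimes> root y) ` (?T \<times> Y))" using assms by simp
  ultimately show ?thesis by (rule countable_subset)
qed

lemma (in comm_group) countable_torsion:
  assumes "countable Y"
    and prime_torsion: "\<And>x p. x \<in> carrier G \<Longrightarrow> Factorial_Ring.prime p \<Longrightarrow> x [^] (p::nat) = \<one> \<Longrightarrow> x \<in> Y"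
  shows "m > 0 \<Longrightarrow> countable {x \<in> carrier G. x [^] (m::nat) = \<one>}"
proof (induction m rule: prime_divisors_induct)
  case zero
  then show ?case by simp
next
  case (unit m)
  then have "{x \<in> carrier G. x [^] m = \<one>} = {\<one>}" by auto
  then show ?case by simp
next
  case (factor p m)
  have "{x \<in> carrier G. x [^] p = \<one>} \<subseteq> Y" using prime_torsion factor(1) by blast
  then have "countable {x \<in> carrier G. x [^] p \<in> {y \<in> carrier G. y [^] m = \<one>}}"
    using factor assms(1) by (intro countable_pow_preimage) (auto intro: countable_subset)
  moreover have "{x \<in> carrier G. x [^] (p * m) = \<one>} = {x \<in> carrier G. x [^] p \<in> {y \<in> carrier G. y [^] m = \<one>}}"
    by (auto simp: nat_pow_pow)
  ultimately show ?case by simp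
qed

lemma (in comm_group) countable_carrier_if_powers_in_countable:
  assumes "countable Y"
    and powers: "\<And>x. x \<in> carrier G \<Longrightarrow> \<exists>m>0. x [^] (m::nat) \<in> Y"
    and prime_torsion: "\<And>x p. x \<in> carrier G \<Longrightarrow> Factorial_Ring.prime p \<Longrightarrow> x [^] (p::nat) = \<one> \<Longrightarrow> x \<in> Y"
  shows "countable (carrier G)"
proof -
  have "carrier G \<subseteq> (\<Union>m\<in>{0<..}. {x \<in> carrier G. x [^] (m::nat) \<in> Y})"
    using powers by blast
  moreover have "countable {x \<in> carrier G. x [^] m \<in> Y}" if "m > 0" for m :: nat
    using countable_pow_preimage[OF assms(1) countable_torsion[OF assms(1) prime_torsion that]] .
  then have "countable (\<Union>m\<in>{0<..}. {x \<in> carrier G. x [^] (m::nat) \<in> Y})"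
    by (intro countable_UN) auto
  ultimately show ?thesis by (rule countable_subset)
qed

lemma (in comm_group) generate_Un_in_finitely_many_cosets:
  assumes "subgroup S G" "finite F" "F \<subseteq> carrier G" "M > 0"
    and "\<And>f. f \<in> F \<Longrightarrow> f [^] (M::nat) \<in> S"
  shows "\<exists>E. finite E \<and> E \<subseteq> carrier G \<and> generate G (S \<union> F) \<subseteq> (\<Union>e\<in>E. S #> e)"
  using assms(2,3,5)
proof (induction F rule: finite_induct)
  case empty
  have "generate G S \<subseteq> S #> \<one>"
    using assms(1) by (simp add: generate_subgroup_eq subgroup.subset)
  then show ?case by (intro exI[of _ "{\<one>}"]) auto
next
  case (insert f F)
  then obtain E where E: "finite E" "E \<subseteq> carrier G" "generate G (S \<union> F) \<subseteq> (\<Union>e\<in>E. S #> e)"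
    by auto
  have f: "f \<in> carrier G" "f [^] M \<in> S" and F: "F \<subseteq> carrier G" using insert.prems by auto
  let ?E = "(\<lambda>(i, e). f [^] (i::int) \<otimes> e) ` ({0..<int M} \<times> E)"
  have "generate G (S \<union> insert f F) = generate G (insert f (S \<union> F))" by simp
  also have "\<dots> \<subseteq> (\<Union>e\<in>?E. S #> e)"
  proof
    fix z assume "z \<in> generate G (insert f (S \<union> F))"
    then obtain k t where z: "z = f [^] (k::int) \<otimes> t" and "t \<in> generate G (S \<union> F)"
      using f(1) F subgroup.subset[OF assms(1)] by (auto simp: generate_insert)
    then obtain s e where t: "t = s \<otimes> e" "s \<in> S" "e \<in> E"
      using E(3) by (auto simp: r_coset_def)
    have s: "s \<in> carrier G" and e: "e \<in> carrier G"
      using t subgroup.subset[OF assms(1)] E(2) by auto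
    have "f [^] k = f [^] (int M * (k div int M) + k mod int M)" by simp
    also have "\<dots> = (f [^] int M) [^] (k div int M) \<otimes> f [^] (k mod int M)"
      using f(1) by (simp only: int_pow_mult int_pow_pow)
    finally have "z = ((f [^] M) [^] (k div int M) \<otimes> s) \<otimes> (f [^] (k mod int M) \<otimes> e)"
      using z t f s e by (simp add: int_pow_int m_ac)
    moreover have "(f [^] M) [^] (k div int M) \<otimes> s \<in> S"
      using subgroup_int_pow_closed[OF assms(1) f(2)] t(2) subgroup.m_closed[OF assms(1)] by blast
    moreover have "f [^] (k mod int M) \<otimes> e \<in> ?E"
      using t(3) assms(4) by (auto intro: image_eqI[of _ _ "(k mod int M, e)"])
    ultimately show "z \<in> (\<Union>e\<in>?E. S #> e)" unfolding r_coset_def by blast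
  qed
  finally show ?case using E f by (intro exI[of _ ?E]) auto
qed

definition escaping_sequence :: "('a, 'b) monoid_scheme \<Rightarrow> 'a set \<Rightarrow> (nat \<Rightarrow> 'a) \<Rightarrow> bool" where
  "escaping_sequence G N b \<longleftrightarrow> (\<forall>n. b n \<in> carrier G \<and> b n \<notin> generate G (N \<union> b ` {..<n}))"

lemma (in group) escaping_sequence_if_not_finitely_generated:
  assumes "\<not> finitely_generated_group G"
  shows "\<exists>b. escaping_sequence G {} b"
proof -
  define c where "c F = (SOME x. x \<in> carrier G \<and> x \<notin> generate G F)" for F
  have c: "c F \<in> carrier G \<and> c F \<notin> generate G F" if "finite F" "F \<subseteq> carrier G" for F
  proof -
    have "generate G F \<noteq> carrier G"
      using assms that unfolding finitely_generated_group_def by blast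
    then have "\<exists>x. x \<in> carrier G \<and> x \<notin> generate G F"
      using generate_incl[OF that(2)] by blast
    then show ?thesis unfolding c_def by (rule someI_ex)
  qed
  define Fs where "Fs = rec_nat {} (\<lambda>_ F. insert (c F) F)"
  define b where "b n = c (Fs n)" for n
  have Fs: "Fs n = b ` {..<n} \<and> Fs n \<subseteq> carrier G" for n
  proof (induction n)
    case (Suc n)
    then have "finite (Fs n)" "Fs n \<subseteq> carrier G" by auto
    then have "b n \<in> carrier G" unfolding b_def using c by blast
    moreover have "Fs (Suc n) = insert (b n) (Fs n)" by (simp add: Fs_def b_def)
    ultimately show ?case using Suc by (auto simp: lessThan_Suc)
  qed (simp add: Fs_def)
  have "b n \<in> carrier G \<and> b n \<notin> generate G ({} \<union> b ` {..<n})" for n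
    using c[of "Fs n"] Fs[of n] unfolding b_def by auto
  then show ?thesis unfolding escaping_sequence_def by blast
qed

lemma (in group) maximal_escaping_set_exists:
  assumes "escaping_sequence G {} b"
  obtains N where "N \<subseteq> carrier G" "escaping_sequence G N b"
    "\<And>N'. N \<subseteq> N' \<Longrightarrow> N' \<subseteq> carrier G \<Longrightarrow> escaping_sequence G N' b \<Longrightarrow> N' = N"
proof -
  let ?A = "{N. N \<subseteq> carrier G \<and> escaping_sequence G N b}"
  have "\<exists>N\<in>?A. \<forall>N'\<in>?A. N \<subseteq> N' \<longrightarrow> N' = N"
  proof (rule subset_Zorn_nonempty)
    have "{} \<in> ?A" using assms by simp
    then show "?A \<noteq> {}" by blast
  next
    fix C assume C: "C \<noteq> {}" "subset.chain ?A C"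
    then have C_sub: "C \<subseteq> ?A" by (simp add: subset_chain_def)
    have "b n \<notin> generate G (\<Union>C \<union> b ` {..<n})" for n
    proof
      assume "b n \<in> generate G (\<Union>C \<union> b ` {..<n})"
      then obtain Z where Z: "finite Z" "Z \<subseteq> \<Union>C \<union> b ` {..<n}" "b n \<in> generate G Z"
        using in_generate_finite_subset by blast
      have "finite (Z \<inter> \<Union>C)" "Z \<inter> \<Union>C \<subseteq> \<Union>C" using Z(1) by auto
      then obtain N where N: "N \<in> C" "Z \<inter> \<Union>C \<subseteq> N"
        by (rule finite_subset_Union_chain[OF _ _ C])
      have "Z \<subseteq> N \<union> b ` {..<n}" using Z(2) N(2) by blast
      then have "b n \<in> generate G (N \<union> b ` {..<n})" using mono_generate Z(3) by blast
      moreover have "escaping_sequence G N b" using N(1) C_sub by blast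
      ultimately show False unfolding escaping_sequence_def by blast
    qed
    moreover have "\<Union>C \<subseteq> carrier G" using C_sub by blast
    ultimately show "\<Union>C \<in> ?A"
      using assms by (simp add: escaping_sequence_def)
  qed
  then obtain N where N: "N \<in> ?A" and max: "\<forall>N'\<in>?A. N \<subseteq> N' \<longrightarrow> N' = N" by blast
  show thesis
  proof (rule that)
    show "N \<subseteq> carrier G" "escaping_sequence G N b" using N by auto
    show "N' = N" if "N \<subseteq> N'" "N' \<subseteq> carrier G" "escaping_sequence G N' b" for N'
      using that max by blast
  qed
qed

locale maximal_escaping_set = comm_group G for G (structure) +
  fixes N :: "'a set" and b :: "nat \<Rightarrow> 'a"
  assumes N_carrier: "N \<subseteq> carrier G"
    and escaping: "escaping_sequence G N b"
    and maximal: "\<And>N'. N \<subseteq> N' \<Longrightarrow> N' \<subseteq> carrier G \<Longrightarrow> escaping_sequence G N' b \<Longrightarrow> N' = N"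
begin

definition L :: "nat \<Rightarrow> 'a set" where "L n = generate G (N \<union> b ` {..<n})"

lemma b_carrier: "b n \<in> carrier G" and b_notin_L: "b n \<notin> L n"
  using escaping unfolding escaping_sequence_def L_def by auto

lemma subgroup_L: "subgroup (L n) G"
  unfolding L_def using N_carrier b_carrier by (intro generate_is_subgroup) auto

lemma L_mono: "m \<le> n \<Longrightarrow> L m \<subseteq> L n"
  unfolding L_def by (intro mono_generate) auto

lemma N_subset_L: "N \<subseteq> L n"
  unfolding L_def by (auto intro: generate.incl)

lemma b_in_L_Suc: "b n \<in> L (Suc n)"
  unfolding L_def by (auto intro: generate.incl)

lemma subgroup_N: "subgroup N G"
proof -
  have "escaping_sequence G (generate G N) b"
    using escaping N_carrier b_carrier
    by (simp add: escaping_sequence_def generate_generate_Un image_subset_iff)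
  then have "generate G N = N"
    using maximal[of "generate G N"] N_carrier generate_incl by (auto intro: generate.incl)
  then show ?thesis using generate_is_subgroup[OF N_carrier] by simp
qed

lemma power_in_L_notin_N:
  assumes x: "x \<in> carrier G" "x \<notin> N"
  obtains k :: int and n where "x [^] k \<in> L n" "x [^] k \<notin> N"
proof -
  have "\<not> escaping_sequence G (insert x N) b"
    using maximal[of "insert x N"] x N_carrier by blast
  then obtain n where "b n \<in> generate G (insert x N \<union> b ` {..<n})"
    using b_carrier unfolding escaping_sequence_def by blast
  also have "generate G (insert x N \<union> b ` {..<n}) = (\<lambda>(k, s). x [^] (k::int) \<otimes> s) ` (UNIV \<times> L n)"
    unfolding L_def using x(1) N_carrier b_carrier by (simp add: generate_insert image_subset_iff)
  finally obtain k s where s: "s \<in> L n" and b: "b n = x [^] (k::int) \<otimes> s" by auto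
  have s_carrier: "s \<in> carrier G" using s subgroup.subset[OF subgroup_L] by blast
  have "x [^] k = b n \<otimes> inv s"
    using b s_carrier x(1) b_carrier by (simp add: m_assoc)
  moreover have "s \<in> L (Suc n)" using s L_mono[of n "Suc n"] by auto
  ultimately have "x [^] k \<in> L (Suc n)"
    using b_in_L_Suc subgroup.m_closed[OF subgroup_L] subgroup.m_inv_closed[OF subgroup_L] by simp
  moreover have "x [^] k \<notin> N"
  proof
    assume "x [^] k \<in> N"
    then have "x [^] k \<otimes> s \<in> L n"
      using s N_subset_L by (intro subgroup.m_closed[OF subgroup_L]) auto
    then show False using b b_notin_L[of n] by simp
  qed
  ultimately show thesis by (rule that)
qed

lemma positive_power_in_L:
  assumes x: "x \<in> carrier G"
  obtains m :: nat and n where "m > 0" "x [^] m \<in> L n"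
proof (cases "x \<in> N")
  case True
  then show thesis using that[of 1 0] N_subset_L x by auto
next
  case False
  then obtain k :: int and n where k: "x [^] k \<in> L n" "x [^] k \<notin> N"
    using power_in_L_notin_N x by blast
  have "k \<noteq> 0" using k(2) subgroup.one_closed[OF subgroup_N] by auto
  have "x [^] nat \<bar>k\<bar> = x [^] \<bar>k\<bar>" using int_pow_int[of G x "nat \<bar>k\<bar>"] by simp
  also have "\<dots> \<in> L n"
    using k(1) subgroup.m_inv_closed[OF subgroup_L] x by (cases "k \<ge> 0") (auto simp: int_pow_neg)
  finally have "x [^] nat \<bar>k\<bar> \<in> L n" .
  then show thesis using \<open>k \<noteq> 0\<close> by (intro that[of "nat \<bar>k\<bar>" n]) auto
qed

lemma in_L_if_prime_power_in_N:
  assumes x: "x \<in> carrier G" and p: "Factorial_Ring.prime p" and xp: "x [^] (p::nat) \<in> N"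
  shows "\<exists>n. x \<in> L n"
proof (cases "x \<in> N")
  case True
  then show ?thesis using N_subset_L by blast
next
  case False
  then obtain k :: int and n where k: "x [^] k \<in> L n" "x [^] k \<notin> N"
    using power_in_L_notin_N x by blast
  have xp': "x [^] int p \<in> N" using xp by (simp add: int_pow_int)
  have "\<not> int p dvd k"
  proof
    assume "int p dvd k"
    then obtain t where "k = int p * t" by (elim dvdE)
    then have "x [^] k = (x [^] int p) [^] t" using x by (simp add: int_pow_pow)
    then show False using k(2) subgroup_int_pow_closed[OF subgroup_N xp'] by simp
  qed
  then have "coprime (int p) k" using p by (intro prime_imp_coprime) simp_all
  moreover obtain u v where "u * int p + v * k = gcd (int p) k" using bezout_int by blast
  ultimately have "int p * u + k * v = 1" by (simp add: mult.commute)
  then have "x = x [^] (int p * u + k * v)" using x by simp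
  also have "\<dots> = (x [^] int p) [^] u \<otimes> (x [^] k) [^] v"
    using x by (simp only: int_pow_mult int_pow_pow)
  finally have x_eq: "x = (x [^] int p) [^] u \<otimes> (x [^] k) [^] v" .
  have "(x [^] int p) [^] u \<in> L n"
    using subgroup_int_pow_closed[OF subgroup_N xp'] N_subset_L by blast
  moreover have "(x [^] k) [^] v \<in> L n" using subgroup_int_pow_closed[OF subgroup_L k(1)] .
  ultimately have "(x [^] int p) [^] u \<otimes> (x [^] k) [^] v \<in> L n"
    by (rule subgroup.m_closed[OF subgroup_L])
  with x_eq have "x \<in> L n" by (rule ssubst)
  then show ?thesis ..
qed

lemma countable_rcosets_N: "countable (rcosets N)"
proof -
  let ?q = "\<lambda>x. N #> x"
  interpret Q: comm_group "G Mod N" by (rule abelian_FactGroup[OF subgroup_N])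
  interpret q: group_hom G "G Mod N" ?q
    using normal.r_coset_hom_Mod[OF subgroup_imp_normal[OF subgroup_N]]
    by (simp add: group_hom_def group_hom_axioms_def)
  have q_one_iff: "?q x = \<one>\<^bsub>G Mod N\<^esub> \<longleftrightarrow> x \<in> N" if "x \<in> carrier G" for x
    using coset_join1[OF _ that subgroup_N] coset_join2[OF that subgroup_N] by auto
  let ?Y = "?q ` (\<Union>n. L n)"
  have "countable (?q ` L n)" for n
  proof -
    have "?q ` L n = generate (G Mod N) (?q ` (N \<union> b ` {..<n}))"
      unfolding L_def using N_carrier b_carrier by (intro q.generate_img[symmetric]) auto
    also have "\<dots> \<subseteq> generate (G Mod N) (insert \<one>\<^bsub>G Mod N\<^esub> (?q ` b ` {..<n}))"
      using q_one_iff N_carrier by (intro Q.mono_generate) auto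
    finally show ?thesis
      using b_carrier Q.one_closed by (elim countable_subset) (intro Q.countable_generate_finite; auto)
  qed
  then have "countable ?Y" unfolding image_UN by blast
  moreover have "\<exists>m>0. z [^]\<^bsub>G Mod N\<^esub> (m::nat) \<in> ?Y" if z: "z \<in> carrier (G Mod N)" for z
  proof -
    obtain x where x: "x \<in> carrier G" "z = ?q x" using z by (auto simp: carrier_FactGroup)
    obtain m :: nat and n where "m > 0" "x [^] m \<in> L n" using positive_power_in_L[OF x(1)] by blast
    moreover have "z [^]\<^bsub>G Mod N\<^esub> m = ?q (x [^] m)" using x by (simp add: q.hom_nat_pow)
    ultimately show ?thesis by blast
  qed
  moreover have "z \<in> ?Y"
    if z: "z \<in> carrier (G Mod N)" and p: "Factorial_Ring.prime p"
      and zp: "z [^]\<^bsub>G Mod N\<^esub> (p::nat) = \<one>\<^bsub>G Mod N\<^esub>" for z p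
  proof -
    obtain x where x: "x \<in> carrier G" "z = ?q x" using z by (auto simp: carrier_FactGroup)
    then have "?q (x [^] p) = \<one>\<^bsub>G Mod N\<^esub>" using zp by (simp add: q.hom_nat_pow)
    then have "x [^] p \<in> N" using q_one_iff x(1) by simp
    then obtain n where "x \<in> L n" using in_L_if_prime_power_in_N x(1) p by blast
    then show ?thesis using x(2) by blast
  qed
  ultimately have "countable (carrier (G Mod N))" by (rule Q.countable_carrier_if_powers_in_countable)
  then show ?thesis by (simp add: FactGroup_def)
qed

lemma infinite_index_L:
  assumes "finite E" "E \<subseteq> carrier G"
  shows "\<not> carrier G \<subseteq> (\<Union>e\<in>E. L n #> e)"
proof
  assume cover: "carrier G \<subseteq> (\<Union>e\<in>E. L n #> e)"
  have distinct: "L n #> b (n + i) \<noteq> L n #> b (n + j)" if "i < j" for i j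
  proof
    assume "L n #> b (n + i) = L n #> b (n + j)"
    then have "b (n + j) \<in> L n #> b (n + i)" using rcos_self[OF b_carrier subgroup_L] by simp
    then obtain h where h: "h \<in> L n" "b (n + j) = h \<otimes> b (n + i)" unfolding r_coset_def by blast
    have "h \<in> L (n + j)" using h(1) L_mono[of n "n + j"] by auto
    moreover have "b (n + i) \<in> L (n + j)" using b_in_L_Suc L_mono[of "Suc (n + i)" "n + j"] that by auto
    ultimately have "h \<otimes> b (n + i) \<in> L (n + j)" by (rule subgroup.m_closed[OF subgroup_L])
    then show False using h(2) b_notin_L[of "n + j"] by simp
  qed
  have "inj (\<lambda>i. L n #> b (n + i))"
  proof (rule injI)
    fix i j assume "L n #> b (n + i) = L n #> b (n + j)"
    then show "i = j" using distinct distinct[symmetric] by (cases i j rule: linorder_cases) auto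
  qed
  then have "infinite (range (\<lambda>i. L n #> b (n + i)))" by (rule range_inj_infinite)
  moreover have "range (\<lambda>i. L n #> b (n + i)) \<subseteq> (\<lambda>e. L n #> e) ` E"
  proof clarify
    fix i
    obtain e where e: "e \<in> E" "b (n + i) \<in> L n #> e" using cover b_carrier by blast
    then have "L n #> e = L n #> b (n + i)"
      using assms(2) by (intro repr_independence[OF _ _ subgroup_L]) auto
    then show "L n #> b (n + i) \<in> (\<lambda>e. L n #> e) ` E" using e(1) by auto
  qed
  ultimately show False using finite_subset finite_imageI[OF assms(1)] by blast
qed

lemma generate_N_Un_finite_neq_carrier:
  assumes F: "finite F" "F \<subseteq> carrier G"
  shows "generate G (N \<union> F) \<noteq> carrier G"
proof
  assume gen: "generate G (N \<union> F) = carrier G"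
  have "\<exists>m n. m > 0 \<and> f [^] (m::nat) \<in> L n" if f: "f \<in> F" for f
  proof -
    have "f \<in> carrier G" using f F(2) by blast
    then obtain m :: nat and n where "m > 0" "f [^] m \<in> L n" by (rule positive_power_in_L)
    then show ?thesis by blast
  qed
  then obtain m :: "'a \<Rightarrow> nat" and n where mn: "\<forall>f\<in>F. m f > 0 \<and> f [^] m f \<in> L (n f)"
    by metis
  define M where "M = (\<Prod>f\<in>F. m f)"
  define n0 where "n0 = (\<Sum>f\<in>F. n f)"
  have "M > 0" unfolding M_def using mn by (simp add: prod_pos)
  have power_M: "f [^] M \<in> L n0" if f: "f \<in> F" for f
  proof -
    have "m f dvd M" unfolding M_def using F(1) f by (rule dvd_prod_eqI) simp
    then obtain t where "M = m f * t" by (elim dvdE)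
    then have "f [^] M = (f [^] m f) [^] int t" using f F(2) by (auto simp: nat_pow_pow int_pow_int)
    moreover have "f [^] m f \<in> L n0"
      using mn f L_mono[of "n f" n0] F(1) f unfolding n0_def by (auto intro: member_le_sum)
    ultimately show ?thesis using subgroup_int_pow_closed[OF subgroup_L] by simp
  qed
  obtain E where E: "finite E" "E \<subseteq> carrier G" "generate G (L n0 \<union> F) \<subseteq> (\<Union>e\<in>E. L n0 #> e)"
    using generate_Un_in_finitely_many_cosets[OF subgroup_L F \<open>M > 0\<close> power_M] by blast
  have "generate G (N \<union> F) \<subseteq> generate G (L n0 \<union> F)"
    using N_subset_L by (intro mono_generate) blast
  with gen E(3) have "carrier G \<subseteq> (\<Union>e\<in>E. L n0 #> e)" by simp
  moreover have "\<not> carrier G \<subseteq> (\<Union>e\<in>E. L n0 #> e)" by (rule infinite_index_L[OF E(1,2)])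
  ultimately show False by contradiction
qed

end

theorem (in comm_group) proper_exhausting_chain_if_not_finitely_generated:
  assumes "\<not> finitely_generated_group G"
  shows "\<exists>W. exhausting_subgroup_chain G W \<and> (\<forall>n. W n \<noteq> carrier G)"
proof -
  obtain b where "escaping_sequence G {} b"
    using escaping_sequence_if_not_finitely_generated[OF assms] by blast
  then obtain N where "N \<subseteq> carrier G" "escaping_sequence G N b"
    "\<And>N'. N \<subseteq> N' \<Longrightarrow> N' \<subseteq> carrier G \<Longrightarrow> escaping_sequence G N' b \<Longrightarrow> N' = N"
    by (rule maximal_escaping_set_exists) blast
  then interpret maximal_escaping_set G N b
    by (simp add: maximal_escaping_set_def maximal_escaping_set_axioms_def comm_group_axioms)
  show ?thesis
    using proper_exhausting_chain_if_countable_index[OF subgroup_N countable_rcosets_N]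
      generate_N_Un_finite_neq_carrier by blast
qed

theorem corollary2p8:
  fixes G :: "('a, 'b) monoid_scheme"
  assumes "group G" and "SB_generated G"
  shows "finitely_generated_group (abelianization G)"
proof (rule ccontr)
  assume "\<not> finitely_generated_group (abelianization G)"
  interpret group G by fact
  let ?D = "derived G (carrier G)"
  interpret Ab: comm_group "G Mod ?D" by (rule derived_quot_is_comm_group)
  interpret h: group_hom G "G Mod ?D" "\<lambda>x. ?D #>\<^bsub>G\<^esub> x"
    using normal.r_coset_hom_Mod[OF derived_self_is_normal]
    by (simp add: group_hom_def group_hom_axioms_def)
  obtain W where W: "exhausting_subgroup_chain (G Mod ?D) W" "\<And>n. W n \<noteq> carrier (G Mod ?D)"
    using Ab.proper_exhausting_chain_if_not_finitely_generated \<open>\<not> finitely_generated_group _\<close>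
    unfolding abelianization_def by blast
  obtain n where "(\<lambda>x. ?D #>\<^bsub>G\<^esub> x) -` W n \<inter> carrier G = carrier G"
    using SB_generated_exhausting_chain_stabilizes[OF assms(2) h.exhausting_subgroup_chain_vimage[OF W(1)]]
    by blast
  then have "carrier (G Mod ?D) \<subseteq> W n" by (auto simp: carrier_FactGroup)
  moreover have "W n \<subseteq> carrier (G Mod ?D)"
    using W(1) subgroup.subset unfolding exhausting_subgroup_chain_def by blast
  ultimately show False using W(2) by blast
qed

end
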